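(* For positive integers $r,n$, $$T(r,n):=\sum_{t\mid r}\frac{|\mu(t_{(n)})|}{\phi(t_{(n)})}\,\phi(t)=\gcd(r,n)\cdot W\big(\gcd(r,r_{(n)})\big).$$
   Context: For positive integers $a,b$, $a_{(b)}:=a/\gcd(a,b)$. $\mu$ is the Möbius function, $\phi$ is Euler's totient function, and $W(a)$ denotes the number of square-free divisors of the positive integer $a$. *)

theory Defs
  imports "HOL-Number_Theory.Number_Theory" "HOL-Computational_Algebra.Squarefree"
begin

definition moebius_mu :: "nat \<Rightarrow> int" where
  "moebius_mu n = (if squarefree n then (-1) ^ card (prime_factors n) else 0)"

text \<open>a_(b) := a / gcd(a,b)\<close>
definition coprime_part :: "nat \<Rightarrow> nat \<Rightarrow> nat" where
  "coprime_part a b = a div gcd a b"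

definition W :: "nat \<Rightarrow> nat" where
  "W a = card {d. d dvd a \<and> squarefree d}"

end

theory Submission imports Defs begin

text \<open>Both sides are multiplicative in r. The left side is the divisor sum of
  t |-> |mu(t_(n))| phi(t) / phi(t_(n)), which is multiplicative because |mu|, 1/phi and phi
  are, and t |-> t_(n) is a multiplicative function with t_(n) dividing t. On the right,
  gcd(r, r_(n)) = r_(n). So it suffices to take r = p^a. If p^b exactly divides n, the
  summand at t = p^j is phi(p^j) for j \<le> b, p^b for j = b + 1 and 0 beyond, so the sum is
  p^a for a \<le> b and 2 p^b otherwise, which is gcd(p^a, n) W(p^(a - b)).\<close>

definition multiplicative_function :: "(nat \<Rightarrow> 'a::comm_semiring_1) \<Rightarrow> bool" where
  "multiplicative_function f \<longleftrightarrow> f 1 = 1 \<and> (\<forall>a b. coprime a b \<longrightarrow> f (a * b) = f a * f b)"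

lemma multiplicative_functionD:
  "multiplicative_function f \<Longrightarrow> coprime a b \<Longrightarrow> f (a * b) = f a * f b"
  unfolding multiplicative_function_def by blast

text \<open>In a coprime pair containing 0 the other member is 1, so positive arguments suffice.\<close>

lemma multiplicative_functionI:
  assumes "f 1 = 1"
    and "\<And>a b. a > 0 \<Longrightarrow> b > 0 \<Longrightarrow> coprime a b \<Longrightarrow> f (a * b) = f a * f b"
  shows "multiplicative_function f"
  unfolding multiplicative_function_def
proof (intro conjI allI impI)
  fix a b :: nat
  assume ab: "coprime a b"
  show "f (a * b) = f a * f b"
  proof (cases "a = 0 \<or> b = 0")
    case True
    with ab have "a = 1 \<or> b = 1" by auto
    with assms(1) show ?thesis by auto
  next
    case False
    with assms(2) ab show ?thesis by simp
  qed
qed (fact assms(1))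

lemma multiplicative_function_mult:
  assumes "multiplicative_function f" "multiplicative_function g"
  shows "multiplicative_function (\<lambda>n. f n * g n)"
  using assms unfolding multiplicative_function_def by (simp add: ac_simps)

lemma multiplicative_function_inverse:
  fixes f :: "nat \<Rightarrow> 'a::field"
  assumes "multiplicative_function f"
  shows "multiplicative_function (\<lambda>n. inverse (f n))"
  using assms unfolding multiplicative_function_def by (simp add: inverse_mult_distrib)

lemma multiplicative_function_of_nat:
  assumes "multiplicative_function f"
  shows "multiplicative_function (\<lambda>n. of_nat (f n) :: 'a::comm_semiring_1)"
  using assms unfolding multiplicative_function_def by simp

lemma multiplicative_function_compose_divisor:
  assumes "multiplicative_function F" "multiplicative_function g" "\<And>n. g n dvd n"
  shows "multiplicative_function (\<lambda>n. F (g n))"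
proof -
  have "g 1 = 1" using assms(2) unfolding multiplicative_function_def by blast
  moreover have "coprime (g a) (g b)" if "coprime a b" for a b
    using that assms(3) by (meson coprime_imp_coprime dvd_trans)
  ultimately show ?thesis
    using assms(1,2) unfolding multiplicative_function_def by simp
qed

lemma sum_divisors_coprime_mult:
  fixes h :: "nat \<Rightarrow> 'a::comm_monoid_add"
  assumes "coprime a b" "a > 0" "b > 0"
  shows "(\<Sum>t | t dvd a * b. h t) = (\<Sum>d | d dvd a. \<Sum>e | e dvd b. h (d * e))"
proof -
  let ?D = "{d. d dvd a} \<times> {e. e dvd b}"
  have image: "{t. t dvd a * b} = (\<lambda>(d, e). d * e) ` ?D"
  proof safe
    fix t assume "t dvd a * b"
    then obtain d e where "t = d * e" "d dvd a" "e dvd b" by (rule dvd_productE)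
    then show "t \<in> (\<lambda>(d, e). d * e) ` ?D" by auto
  qed (auto intro: mult_dvd_mono)
  have "inj_on (\<lambda>(d, e). d * e) ?D"
  proof (rule inj_onI, clarsimp)
    fix d e d' e' :: nat
    assume h: "d dvd a" "e dvd b" "d' dvd a" "e' dvd b" "d * e = d' * e'"
    have "coprime d e'" "coprime d' e"
      using assms(1) h by (meson coprime_imp_coprime dvd_trans)+
    moreover have "d dvd d' * e'" "d' dvd d * e" using h(5) by (metis dvd_triv_left)+
    ultimately have "d = d'"
      by (meson coprime_dvd_mult_left_iff coprime_commute dvd_antisym)
    moreover have "d \<noteq> 0" using h(1) assms(2) by auto
    ultimately show "d = d' \<and> e = e'" using h(5) by simp
  qed
  moreover have "finite {d. d dvd a}" "finite {e. e dvd b}" using assms by auto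
  ultimately show ?thesis
    unfolding image by (simp add: sum.reindex sum.cartesian_product split_def)
qed

lemma multiplicative_function_divisor_sum:
  assumes "multiplicative_function f"
  shows "multiplicative_function (\<lambda>n. \<Sum>d | d dvd n. f d)"
proof (rule multiplicative_functionI)
  show "(\<Sum>d | d dvd 1. f d) = 1"
    using assms by (simp add: multiplicative_function_def)
next
  fix a b :: nat
  assume ab: "a > 0" "b > 0" "coprime a b"
  have "(\<Sum>t | t dvd a * b. f t) = (\<Sum>d | d dvd a. \<Sum>e | e dvd b. f (d * e))"
    using ab by (simp add: sum_divisors_coprime_mult)
  also have "\<dots> = (\<Sum>d | d dvd a. \<Sum>e | e dvd b. f d * f e)"
    using ab(3) by (intro sum.cong refl multiplicative_functionD[OF assms])
      (auto intro: coprime_imp_coprime dvd_trans)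
  also have "\<dots> = (\<Sum>d | d dvd a. f d) * (\<Sum>e | e dvd b. f e)"
    by (simp add: sum_product)
  finally show "(\<Sum>t | t dvd a * b. f t) = (\<Sum>d | d dvd a. f d) * (\<Sum>e | e dvd b. f e)" .
qed

lemma multiplicative_function_eqI:
  assumes f: "multiplicative_function f" and g: "multiplicative_function g"
    and prime_power: "\<And>p k. prime p \<Longrightarrow> f (p ^ k) = g (p ^ k)"
    and "n > 0"
  shows "f n = g n"
  using \<open>n > 0\<close>
proof (induction n rule: less_induct)
  case (less n)
  show ?case
  proof (cases "n = 1")
    case True
    with f g show ?thesis by (simp add: multiplicative_function_def)
  next
    case False
    then obtain p where p: "prime p" "p dvd n" using prime_factor_nat by blast
    define k where "k = multiplicity p n"
    have "\<not> is_unit p" using p by auto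
    then obtain m where n: "n = p ^ k * m" and m: "\<not> p dvd m"
      using multiplicity_decompose'[of n p] less.prems unfolding k_def by blast
    have "k > 0"
      using p less.prems by (simp add: k_def prime_multiplicity_gt_zero_iff prime_imp_prime_elem)
    then have "p ^ k > 1"
      using prime_gt_1_nat[OF p(1)] one_less_power by blast
    moreover have "m > 0" using n less.prems by (auto intro: gr0I)
    ultimately have "m < n" by (subst n) simp
    moreover have "coprime (p ^ k) m"
      using p(1) m by (simp add: prime_imp_coprime)
    ultimately have "f (p ^ k * m) = g (p ^ k * m)"
      using \<open>m > 0\<close> by (simp add: multiplicative_functionD[OF f] multiplicative_functionD[OF g]
          prime_power[OF p(1)] less.IH)
    with n show ?thesis by simp
  qed
qed

lemma gcd_mult_coprime_left:
  fixes a b c :: nat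
  assumes "coprime a b"
  shows "gcd (a * b) c = gcd a c * gcd b c"
proof (rule dvd_antisym)
  obtain u v where uv: "gcd (a * b) c = u * v" "u dvd a" "v dvd b"
    using dvd_productE[of "gcd (a * b) c" a b] by auto
  then have "u dvd c" "v dvd c" by (metis dvd_mult_right dvd_mult_left gcd_dvd2 dvd_trans)+
  with uv show "gcd (a * b) c dvd gcd a c * gcd b c" by (simp add: mult_dvd_mono)
next
  have "coprime (gcd a c) (gcd b c)"
    using assms by (rule coprime_imp_coprime) (meson gcd_dvd1 dvd_trans)+
  moreover have "gcd a c dvd gcd (a * b) c" "gcd b c dvd gcd (a * b) c"
    by (simp_all add: gcd_mono)
  ultimately show "gcd a c * gcd b c dvd gcd (a * b) c" by (simp add: divides_mult)
qed

lemma multiplicative_function_gcd: "multiplicative_function (\<lambda>r. gcd r n)"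
  by (simp add: multiplicative_function_def gcd_mult_coprime_left)

lemma coprime_part_dvd: "coprime_part a n dvd a"
  unfolding coprime_part_def by (metis dvd_div_mult_self dvd_triv_left gcd_dvd1)

lemma gcd_coprime_part: "gcd a (coprime_part a n) = coprime_part a n"
  by (simp add: coprime_part_dvd gcd_nat.absorb2)

lemma multiplicative_function_coprime_part: "multiplicative_function (\<lambda>r. coprime_part r n)"
  by (simp add: multiplicative_function_def coprime_part_def gcd_mult_coprime_left
      div_mult_div_if_dvd)

lemma multiplicative_function_totient: "multiplicative_function totient"
  by (simp add: multiplicative_function_def totient_mult_coprime)

lemma multiplicative_function_squarefree_indicator:
  "multiplicative_function (\<lambda>n. if squarefree n then 1 else 0 :: 'a::comm_semiring_1)"
  by (auto simp: multiplicative_function_def squarefree_mult_coprime dest: squarefree_multD)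

lemma W_eq_divisor_sum: "W n = (\<Sum>d | d dvd n. if squarefree d then 1 else 0)"
proof (cases "n = 0")
  case True
  have "infinite {d::nat. squarefree d}"
    using primes_infinite by (rule infinite_super[rotated]) (auto intro: squarefree_prime)
  with True show ?thesis by (simp add: W_def)
next
  case False
  then show ?thesis by (simp add: W_def sum.If_cases Int_def)
qed

lemma multiplicative_function_W: "multiplicative_function W"
  unfolding W_eq_divisor_sum[abs_def]
  by (intro multiplicative_function_divisor_sum multiplicative_function_squarefree_indicator)

lemma abs_moebius_mu: "\<bar>moebius_mu n\<bar> = (if squarefree n then 1 else 0)"
  by (simp add: moebius_mu_def power_abs)

lemma multiplicative_function_T_summand:
  "multiplicative_function (\<lambda>t. of_int \<bar>moebius_mu (coprime_part t n)\<bar>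
     / of_nat (totient (coprime_part t n)) * of_nat (totient t) :: 'a::field)"
proof -
  have "(\<lambda>m. of_int \<bar>moebius_mu m\<bar> / of_nat (totient m) :: 'a)
      = (\<lambda>m. (if squarefree m then 1 else 0) * inverse (of_nat (totient m)))"
    by (simp add: abs_moebius_mu divide_inverse fun_eq_iff)
  moreover have "multiplicative_function \<dots>"
    by (intro multiplicative_function_mult multiplicative_function_inverse
        multiplicative_function_of_nat multiplicative_function_squarefree_indicator
        multiplicative_function_totient)
  ultimately have "multiplicative_function (\<lambda>m. of_int \<bar>moebius_mu m\<bar> / of_nat (totient m) :: 'a)"
    by simp
  then have "multiplicative_function (\<lambda>t. of_int \<bar>moebius_mu (coprime_part t n)\<bar>
      / of_nat (totient (coprime_part t n)) :: 'a)"
    using multiplicative_function_coprime_part coprime_part_dvd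
    by (rule multiplicative_function_compose_divisor)
  then show ?thesis
    using multiplicative_function_of_nat[OF multiplicative_function_totient]
    by (rule multiplicative_function_mult)
qed

lemma multiplicative_function_gcd_mult_W_coprime_part:
  "multiplicative_function (\<lambda>r. gcd r n * W (coprime_part r n))"
  using multiplicative_function_gcd
    multiplicative_function_compose_divisor[OF multiplicative_function_W
      multiplicative_function_coprime_part coprime_part_dvd]
  by (rule multiplicative_function_mult)

lemma sum_divisors_prime_power:
  fixes p :: nat
  assumes "prime p"
  shows "(\<Sum>d | d dvd p ^ a. f d) = (\<Sum>j\<le>a. f (p ^ j))"
proof -
  have "{d. d dvd p ^ a} = (\<lambda>j. p ^ j) ` {..a}"
    using divides_primepow_nat[OF assms] by auto
  moreover have "inj_on (\<lambda>j. p ^ j) {..a}"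
    using prime_gt_1_nat[OF assms] by (auto intro!: inj_onI simp: power_inject_exp)
  ultimately show ?thesis by (simp add: sum.reindex)
qed

lemma squarefree_prime_power_iff: "prime (p::nat) \<Longrightarrow> squarefree (p ^ j) \<longleftrightarrow> j \<le> 1"
  by (auto simp: squarefree_power_iff squarefree_prime)

lemma W_prime_power:
  assumes "prime p"
  shows "W (p ^ e) = min e 1 + 1"
proof -
  have "W (p ^ e) = (\<Sum>j\<le>e. if j \<le> 1 then 1 else 0)"
    by (simp add: W_eq_divisor_sum sum_divisors_prime_power[OF assms]
        squarefree_prime_power_iff[OF assms])
  also have "\<dots> = min e 1 + 1" by (induction e) auto
  finally show ?thesis .
qed

lemma sum_totient_prime_powers: "prime (p::nat) \<Longrightarrow> (\<Sum>j\<le>a. totient (p ^ j)) = p ^ a"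
  using totient_divisor_sum[of "p ^ a"] by (simp add: sum_divisors_prime_power)

lemma gcd_prime_power_left:
  fixes p :: nat
  assumes p: "prime p" and "n > 0"
  shows "gcd (p ^ j) n = p ^ min j (multiplicity p n)"
proof -
  define b where "b = multiplicity p n"
  have "\<not> is_unit p" using p by auto
  then obtain k where n: "n = p ^ b * k" and k: "\<not> p dvd k"
    using multiplicity_decompose'[of n p] \<open>n > 0\<close> unfolding b_def by blast
  have "coprime (p ^ j) k" using p k by (simp add: prime_imp_coprime)
  then have "gcd (p ^ j) n = gcd (p ^ j) (p ^ b)"
    unfolding n by (rule gcd_mult_right_right_cancel)
  also have "\<dots> = p ^ min j b"
    by (cases "j \<le> b") (simp_all add: le_imp_power_dvd gcd_nat.absorb1 gcd_nat.absorb2)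
  finally show ?thesis unfolding b_def .
qed

lemma coprime_part_prime_power:
  fixes p :: nat
  assumes "prime p" "n > 0"
  shows "coprime_part (p ^ j) n = p ^ (j - multiplicity p n)"
proof -
  have "p ^ j div p ^ min j (multiplicity p n) = p ^ (j - min j (multiplicity p n))"
    using prime_gt_0_nat[OF assms(1)] by (intro power_diff[symmetric]) auto
  moreover have "j - min j (multiplicity p n) = j - multiplicity p n" by simp
  ultimately show ?thesis by (simp add: coprime_part_def gcd_prime_power_left[OF assms])
qed

lemma T_summand_prime_power:
  fixes p :: nat
  assumes p: "prime p" and "n > 0"
  defines "b \<equiv> multiplicity p n"
  shows "of_int \<bar>moebius_mu (coprime_part (p ^ j) n)\<bar>
           / of_nat (totient (coprime_part (p ^ j) n)) * of_nat (totient (p ^ j))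
         = (if j \<le> b then of_nat (totient (p ^ j)) else if j = Suc b then of_nat (p ^ b)
            else (0 :: 'a::field_char_0))"
proof -
  have "totient p \<noteq> 0" using prime_gt_0_nat[OF p] by simp
  moreover have "j - b \<le> 1 \<longleftrightarrow> j \<le> b \<or> j = Suc b" by linarith
  moreover have "totient (p * p ^ b) = p ^ b * totient p"
    using totient_power_Suc[of p b] by simp
  ultimately show ?thesis
    by (auto simp: coprime_part_prime_power[OF assms(1,2)] abs_moebius_mu
        squarefree_prime_power_iff[OF p] b_def)
qed

lemma T_prime_power:
  fixes p :: nat
  assumes p: "prime p" and "n > 0"
  shows "(\<Sum>t | t dvd p ^ a. of_int \<bar>moebius_mu (coprime_part t n)\<bar>
            / of_nat (totient (coprime_part t n)) * of_nat (totient t))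
         = (of_nat (gcd (p ^ a) n * W (coprime_part (p ^ a) n)) :: 'a::field_char_0)"
proof -
  define b where "b = multiplicity p n"
  define s :: "nat \<Rightarrow> 'a" where
    "s j = (if j \<le> b then of_nat (totient (p ^ j)) else if j = Suc b then of_nat (p ^ b) else 0)"
    for j
  have "(\<Sum>t | t dvd p ^ a. of_int \<bar>moebius_mu (coprime_part t n)\<bar>
            / of_nat (totient (coprime_part t n)) * of_nat (totient t)) = (\<Sum>j\<le>a. s j)"
    by (simp only: sum_divisors_prime_power[OF p] T_summand_prime_power[OF assms] s_def b_def)
  also have "\<dots> = of_nat (p ^ min a b * (min (a - b) 1 + 1))"
  proof (cases "a \<le> b")
    case True
    then have "(\<Sum>j\<le>a. s j) = of_nat (\<Sum>j\<le>a. totient (p ^ j))"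
      by (simp add: s_def)
    with True show ?thesis by (simp add: sum_totient_prime_powers[OF p])
  next
    case False
    then have "(\<Sum>j\<le>a. s j) = (\<Sum>j\<le>Suc b. s j)"
      by (intro sum.mono_neutral_right) (auto simp: s_def)
    also have "\<dots> = of_nat (\<Sum>j\<le>b. totient (p ^ j)) + of_nat (p ^ b)"
      by (simp add: s_def)
    finally show ?thesis using False by (simp add: sum_totient_prime_powers[OF p])
  qed
  also have "\<dots> = of_nat (gcd (p ^ a) n * W (coprime_part (p ^ a) n))"
    by (simp add: gcd_prime_power_left[OF assms] coprime_part_prime_power[OF assms]
        W_prime_power[OF p] b_def)
  finally show ?thesis .
qed

theorem lemma2p4:
  fixes r n :: nat
  assumes "r > 0" and "n > 0"
  shows "(\<Sum>t | t dvd r.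
            (of_int \<bar>moebius_mu (coprime_part t n)\<bar> / of_nat (totient (coprime_part t n)))
            * of_nat (totient t) :: rat)
         = of_nat (gcd r n * W (gcd r (coprime_part r n)))"
  unfolding gcd_coprime_part
proof (rule multiplicative_function_eqI[OF _ _ _ \<open>r > 0\<close>])
  show "multiplicative_function (\<lambda>r. \<Sum>t | t dvd r. of_int \<bar>moebius_mu (coprime_part t n)\<bar>
          / of_nat (totient (coprime_part t n)) * of_nat (totient t) :: rat)"
    by (intro multiplicative_function_divisor_sum multiplicative_function_T_summand)
  show "multiplicative_function (\<lambda>r. of_nat (gcd r n * W (coprime_part r n)) :: rat)"
    by (intro multiplicative_function_of_nat multiplicative_function_gcd_mult_W_coprime_part)
qed (rule T_prime_power[OF _ \<open>n > 0\<close>])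

end
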